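(* Let $x_0\in X$ be a regular point. Every non-negative $p$-harmonic function $u$ on $\mathcal T(x_0)$ is the quotient of two additive functions on $\mathcal T(x_0)$; specifically $u=\nu/\nu_0$ for some additive $\nu$, where $\nu_0(x)=W^{(n(x))}(x)$ is additive.
   Context: $X$ is a compact metric space, $r:X\to X$ a finite-to-one, onto, Borel map, $m_0$ a Borel function with $\frac{1}{\#r^{-1}(x)}\sum_{r(y)=x}|m_0(y)|^2=1$, and $W(x)=|m_0(x)|^2/\#r^{-1}(r(x))$, so $\sum_{r(y)=x}W(y)=1$. A point $x_0$ is regular if the sets $r^{-n}(x_0)$, $n\in\mathbb N$, are mutually disjoint and no $r^{-n}(x_0)$, $n\ge0$, meets the zero set of $W$. $\mathcal T(x_0)=\bigcup_{n\ge0}r^{-n}(x_0)$; $n(x)$ is the unique $n\ge0$ with $r^n(x)=x_0$; $W^{(n)}(x)=W(x)W(r(x))\cdots W(r^{n-1}(x))$. $u$ is $p$-harmonic if $u(x)=\sum_{r(y)=x}W(y)u(y)$ on $\mathcal T(x_0)$. A non-negative $\nu$ on $\mathcal T(x_0)$ is additive if $\nu(x)=\sum_{r(y)=x}\nu(y)$ for all $x\in\mathcal T(x_0)$. *)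

theory Defs
  imports "HOL-Analysis.Analysis"
begin

definition preim :: "'a set \<Rightarrow> ('a \<Rightarrow> 'a) \<Rightarrow> 'a \<Rightarrow> 'a set" where
  "preim X r x = {y \<in> X. r y = x}"

definition preim_n :: "'a set \<Rightarrow> ('a \<Rightarrow> 'a) \<Rightarrow> nat \<Rightarrow> 'a \<Rightarrow> 'a set" where
  "preim_n X r n x0 = {y \<in> X. (r ^^ n) y = x0}"

definition Wfun :: "'a set \<Rightarrow> ('a \<Rightarrow> 'a) \<Rightarrow> ('a \<Rightarrow> complex) \<Rightarrow> 'a \<Rightarrow> real" where
  "Wfun X r m0 x = (cmod (m0 x))\<^sup>2 / real (card (preim X r (r x)))"

definition tree :: "'a set \<Rightarrow> ('a \<Rightarrow> 'a) \<Rightarrow> 'a \<Rightarrow> 'a set" where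
  "tree X r x0 = (\<Union>n. preim_n X r n x0)"

definition regular_point :: "'a set \<Rightarrow> ('a \<Rightarrow> 'a) \<Rightarrow> ('a \<Rightarrow> complex) \<Rightarrow> 'a \<Rightarrow> bool" where
  "regular_point X r m0 x0 \<longleftrightarrow> x0 \<in> X \<and>
     (\<forall>n k. n \<noteq> k \<longrightarrow> preim_n X r n x0 \<inter> preim_n X r k x0 = {}) \<and>
     (\<forall>n. \<forall>y \<in> preim_n X r n x0. Wfun X r m0 y \<noteq> 0)"

definition level :: "('a \<Rightarrow> 'a) \<Rightarrow> 'a \<Rightarrow> 'a \<Rightarrow> nat" where
  "level r x0 x = (THE n. (r ^^ n) x = x0)"

definition Wn :: "'a set \<Rightarrow> ('a \<Rightarrow> 'a) \<Rightarrow> ('a \<Rightarrow> complex) \<Rightarrow> nat \<Rightarrow> 'a \<Rightarrow> real" where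
  "Wn X r m0 n x = (\<Prod>k<n. Wfun X r m0 ((r ^^ k) x))"

definition nu0 :: "'a set \<Rightarrow> ('a \<Rightarrow> 'a) \<Rightarrow> ('a \<Rightarrow> complex) \<Rightarrow> 'a \<Rightarrow> 'a \<Rightarrow> real" where
  "nu0 X r m0 x0 x = Wn X r m0 (level r x0 x) x"

definition p_harmonic :: "'a set \<Rightarrow> ('a \<Rightarrow> 'a) \<Rightarrow> ('a \<Rightarrow> complex) \<Rightarrow> 'a \<Rightarrow> ('a \<Rightarrow> real) \<Rightarrow> bool" where
  "p_harmonic X r m0 x0 u \<longleftrightarrow>
     (\<forall>x \<in> tree X r x0. u x = (\<Sum>y \<in> preim X r x. Wfun X r m0 y * u y))"

definition additive_on_tree :: "'a set \<Rightarrow> ('a \<Rightarrow> 'a) \<Rightarrow> 'a \<Rightarrow> ('a \<Rightarrow> real) \<Rightarrow> bool" where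
  "additive_on_tree X r x0 \<nu> \<longleftrightarrow>
     (\<forall>x \<in> tree X r x0. \<nu> x \<ge> 0) \<and>
     (\<forall>x \<in> tree X r x0. \<nu> x = (\<Sum>y \<in> preim X r x. \<nu> y))"

end

theory Submission
  imports Defs
begin

text \<open>
  Along the tree the weight \<open>\<nu>\<^sub>0\<close> is multiplicative: a child \<open>y\<close> of \<open>x\<close> has
  \<open>\<nu>\<^sub>0 y = W y \<cdot> \<nu>\<^sub>0 x\<close>, because regularity makes the level of \<open>y\<close> exactly one
  more than that of \<open>x\<close>. Since the weights \<open>W\<close> of the children sum to \<open>1\<close>, \<open>\<nu>\<^sub>0\<close> is
  additive, and for the same reason the harmonicity of \<open>u\<close> is precisely the additivity
  of \<open>\<nu> = u \<cdot> \<nu>\<^sub>0\<close>. Regularity also makes \<open>\<nu>\<^sub>0\<close> strictly positive, so \<open>u = \<nu> / \<nu>\<^sub>0\<close>.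
\<close>

lemma funpow_closed:
  assumes "\<forall>x \<in> X. r x \<in> X" "x \<in> X"
  shows "(r ^^ k) x \<in> X"
  using assms by (induction k) auto

lemma mem_tree_iff: "x \<in> tree X r x0 \<longleftrightarrow> x \<in> X \<and> (\<exists>n. (r ^^ n) x = x0)"
  unfolding tree_def preim_n_def by auto

lemma level_eqI:
  assumes "regular_point X r m0 x0" "x \<in> X" "(r ^^ n) x = x0"
  shows "level r x0 x = n"
  unfolding level_def
proof (rule the_equality)
  fix k assume "(r ^^ k) x = x0"
  with assms have "x \<in> preim_n X r k x0 \<inter> preim_n X r n x0"
    unfolding preim_n_def by blast
  with assms(1) show "k = n" unfolding regular_point_def by blast
qed (fact assms(3))

lemma Wfun_nonneg: "Wfun X r m0 y \<ge> 0"
  unfolding Wfun_def by simp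

lemma Wn_pos:
  assumes "regular_point X r m0 x0" "\<forall>x \<in> X. r x \<in> X" "x \<in> X" "(r ^^ n) x = x0"
  shows "Wn X r m0 n x > 0"
  unfolding Wn_def
proof (rule prod_pos)
  fix k assume "k \<in> {..<n}"
  then have "n - k + k = n" by simp
  then have "(r ^^ (n - k)) ((r ^^ k) x) = (r ^^ n) x"
    by (metis funpow_add o_apply)
  then have "(r ^^ (n - k)) ((r ^^ k) x) = x0" using assms(4) by simp
  moreover have "(r ^^ k) x \<in> X" using funpow_closed[OF assms(2,3)] .
  ultimately have "(r ^^ k) x \<in> preim_n X r (n - k) x0" unfolding preim_n_def by blast
  with assms(1) have "Wfun X r m0 ((r ^^ k) x) \<noteq> 0" unfolding regular_point_def by blast
  with Wfun_nonneg[of X r m0 "(r ^^ k) x"] show "0 < Wfun X r m0 ((r ^^ k) x)" by linarith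
qed

lemma nu0_pos:
  assumes "regular_point X r m0 x0" "\<forall>x \<in> X. r x \<in> X" "x \<in> tree X r x0"
  shows "nu0 X r m0 x0 x > 0"
proof -
  obtain n where n: "x \<in> X" "(r ^^ n) x = x0" using assms(3) unfolding mem_tree_iff by blast
  show ?thesis unfolding nu0_def using level_eqI[OF assms(1) n] Wn_pos[OF assms(1,2) n] by simp
qed

lemma nu0_preim:
  assumes "regular_point X r m0 x0" "x \<in> tree X r x0" "y \<in> preim X r x"
  shows "nu0 X r m0 x0 y = Wfun X r m0 y * nu0 X r m0 x0 x"
proof -
  obtain n where n: "x \<in> X" "(r ^^ n) x = x0" using assms(2) unfolding mem_tree_iff by blast
  have y: "y \<in> X" "r y = x" using assms(3) unfolding preim_def by auto
  then have "(r ^^ Suc n) y = x0" using n(2) by (simp only: funpow_Suc_right o_apply)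
  then have "level r x0 y = Suc n" using level_eqI[OF assms(1) y(1)] by blast
  moreover have "Wn X r m0 (Suc n) y = Wfun X r m0 y * Wn X r m0 n x"
    unfolding Wn_def prod.lessThan_Suc_shift
    by (simp add: funpow_Suc_right y(2) del: funpow.simps)
  ultimately show ?thesis unfolding nu0_def using level_eqI[OF assms(1) n] by simp
qed

lemma sum_Wfun_preim:
  assumes "(1 / real (card (preim X r x))) * (\<Sum>y \<in> preim X r x. (cmod (m0 y))\<^sup>2) = 1"
  shows "(\<Sum>y \<in> preim X r x. Wfun X r m0 y) = 1"
proof -
  have "(\<Sum>y \<in> preim X r x. Wfun X r m0 y) =
        (\<Sum>y \<in> preim X r x. (cmod (m0 y))\<^sup>2 / real (card (preim X r x)))"
    by (rule sum.cong) (auto simp: Wfun_def preim_def)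
  also have "\<dots> = 1" using assms by (simp add: sum_divide_distrib)
  finally show ?thesis .
qed

lemma sum_preim_Wfun_mult_nu0:
  assumes "regular_point X r m0 x0" "x \<in> tree X r x0"
  shows "(\<Sum>y \<in> preim X r x. Wfun X r m0 y * f y) * nu0 X r m0 x0 x
           = (\<Sum>y \<in> preim X r x. f y * nu0 X r m0 x0 y)"
  unfolding sum_distrib_right
  by (rule sum.cong) (simp_all add: nu0_preim[OF assms])

lemma additive_nu0:
  assumes "regular_point X r m0 x0" "\<forall>x \<in> X. r x \<in> X"
    and "\<forall>x \<in> X. (1 / real (card (preim X r x))) * (\<Sum>y \<in> preim X r x. (cmod (m0 y))\<^sup>2) = 1"
  shows "additive_on_tree X r x0 (nu0 X r m0 x0)"
  unfolding additive_on_tree_def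
proof (intro conjI ballI)
  fix x assume x: "x \<in> tree X r x0"
  show "0 \<le> nu0 X r m0 x0 x" using nu0_pos[OF assms(1,2) x] by simp
  have "x \<in> X" using x unfolding mem_tree_iff by blast
  then have "(\<Sum>y \<in> preim X r x. Wfun X r m0 y) = 1"
    using assms(3) by (blast intro: sum_Wfun_preim)
  then show "nu0 X r m0 x0 x = (\<Sum>y \<in> preim X r x. nu0 X r m0 x0 y)"
    using sum_preim_Wfun_mult_nu0[OF assms(1) x, of "\<lambda>_. 1"] by simp
qed

lemma additive_harmonic_times_nu0:
  assumes "regular_point X r m0 x0" "\<forall>x \<in> X. r x \<in> X"
    and "p_harmonic X r m0 x0 u" "\<forall>x \<in> tree X r x0. u x \<ge> 0"
  shows "additive_on_tree X r x0 (\<lambda>x. u x * nu0 X r m0 x0 x)"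
  unfolding additive_on_tree_def
proof (intro conjI ballI)
  fix x assume x: "x \<in> tree X r x0"
  show "0 \<le> u x * nu0 X r m0 x0 x" using nu0_pos[OF assms(1,2) x] assms(4) x by simp
  show "u x * nu0 X r m0 x0 x = (\<Sum>y \<in> preim X r x. u y * nu0 X r m0 x0 y)"
    using assms(3) x sum_preim_Wfun_mult_nu0[OF assms(1) x, of u]
    unfolding p_harmonic_def by simp
qed

theorem corollary4p9:
  fixes X :: "'a::metric_space set" and r :: "'a \<Rightarrow> 'a" and m0 :: "'a \<Rightarrow> complex"
    and x0 :: 'a and u :: "'a \<Rightarrow> real"
  assumes "compact X"
    and "\<forall>x \<in> X. r x \<in> X" and "r ` X = X"
    and "\<forall>x \<in> X. finite (preim X r x)"
    and "r \<in> borel_measurable (restrict_space borel X)"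
    and "m0 \<in> borel_measurable (restrict_space borel X)"
    and "\<forall>x \<in> X. (1 / real (card (preim X r x))) * (\<Sum>y \<in> preim X r x. (cmod (m0 y))\<^sup>2) = 1"
    and "regular_point X r m0 x0"
    and "p_harmonic X r m0 x0 u"
    and "\<forall>x \<in> tree X r x0. u x \<ge> 0"
  shows "additive_on_tree X r x0 (nu0 X r m0 x0) \<and>
         (\<exists>\<nu>. additive_on_tree X r x0 \<nu> \<and> (\<forall>x \<in> tree X r x0. u x = \<nu> x / nu0 X r m0 x0 x))"
proof -
  have "\<forall>x \<in> tree X r x0. u x = u x * nu0 X r m0 x0 x / nu0 X r m0 x0 x"
    using nu0_pos[OF assms(8,2)] by fastforce
  then show ?thesis
    using additive_nu0[OF assms(8,2,7)] additive_harmonic_times_nu0[OF assms(8,2,9,10)] by blast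
qed

end
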